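(* Let $\Lambda$ be the set of all injections $t$ whose domain $\operatorname{dom}t$ is a countable ordinal, with values in $\omega=\{0,1,2,\dots\}$, and whose range is a co-infinite subset of $\omega$, ordered by extension ($t\preceq u$ iff $\operatorname{dom}t\subseteq\operatorname{dom}u$ and $u|_{\operatorname{dom}t}=t$). Let $\lambda(t)=\sum_{\alpha\in\operatorname{dom}t}2^{-t(\alpha)}$ and let $\mathcal{T}_\lambda$ be the topology on $\Lambda$ in which a base of neighbourhoods of $t$ consists of the sets $\{u\in\Lambda: t\preceq u,\ \lambda(u)<\lambda(t)+\epsilon\}$, $\epsilon>0$. Then $(\Lambda,\mathcal{T}_\lambda)$ is a Baire space.
   Context: A Baire space is a topological space in which every countable intersection of dense open sets is dense. *)

theory Defs
  imports "HOL-Analysis.Analysis"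
begin

definition Baire_space :: "'a topology \<Rightarrow> bool" where
  "Baire_space X \<longleftrightarrow>
     (\<forall>U :: nat \<Rightarrow> 'a set.
        (\<forall>n. openin X (U n) \<and> X closure_of (U n) = topspace X)
        \<longrightarrow> X closure_of (\<Inter>n. U n) = topspace X)"

text \<open>Countable ordinals are modelled as the proper initial segments {..<a} of a
  well-ordered type 'o of order type omega_1 (uncountable, all proper initial
  segments countable).\<close>
definition Lam :: "('o::wellorder \<rightharpoonup> nat) set" where
  "Lam = {t. (\<exists>a. dom t = {..<a}) \<and> inj_on t (dom t) \<and> infinite (UNIV - ran t)}"

definition lam :: "('o::wellorder \<rightharpoonup> nat) \<Rightarrow> real" where
  "lam t = infsum (\<lambda>b. (1/2::real) ^ the (t b)) (dom t)"

definition nbhd :: "('o::wellorder \<rightharpoonup> nat) \<Rightarrow> real \<Rightarrow> ('o \<rightharpoonup> nat) set" where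
  "nbhd t \<epsilon> = {u \<in> Lam. t \<subseteq>\<^sub>m u \<and> lam u < lam t + \<epsilon>}"

definition T_lam :: "('o::wellorder \<rightharpoonup> nat) topology" where
  "T_lam = topology (\<lambda>U. U \<subseteq> Lam \<and> (\<forall>t\<in>U. \<exists>\<epsilon>>0. nbhd t \<epsilon> \<subseteq> U))"

end

theory Submission
  imports Defs
begin

text \<open>Given dense open sets U n and a nonempty open W, choose nested basic neighbourhoods
  nbhd (t n) (e n) inside W \<inter> U 0 \<inter> ... \<inter> U (n - 1) with lam (t (n+1)) + e (n+1) < lam (t n) + e n.
  Then t m extends t n for m \<ge> n, and the union of this chain has an initial segment of
  the ordinals as domain (a proper one, being countable) and is injective; lam of the
  union is at most lam (t (n+1)) + e (n+1) for every n, so by the strict shrinking it lies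
  in every chosen neighbourhood.
  The remaining danger is a co-finite range of the union. It is avoided by carrying along
  increasing values k n unused by t n with e n \<le> 2^-(k n): a member of nbhd (t n) (e n) taking
  the value k n would have lam at least lam (t n) + 2^-(k n), so none of them takes it.\<close>

definition weight :: "('o \<rightharpoonup> nat) \<Rightarrow> 'o \<Rightarrow> real" where
  "weight t b = (1/2) ^ the (t b)"

lemma lam_eq_infsum_weight: "lam t = infsum (weight t) (dom t)"
  unfolding lam_def weight_def ..

lemma weight_nonneg: "weight t b \<ge> 0"
  unfolding weight_def by simp

lemma summable_on_weight:
  assumes "inj_on t (dom t)"
  shows "weight t summable_on dom t"
proof -
  have "(\<lambda>n::nat. (1/2::real) ^ n) summable_on UNIV"
    by (subst summable_on_UNIV_nonneg_real_iff) (auto intro: summable_geometric)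
  then have "(\<lambda>n::nat. (1/2::real) ^ n) summable_on (the \<circ> t) ` dom t"
    by (rule summable_on_subset_banach) simp
  moreover have "inj_on (the \<circ> t) (dom t)"
    using assms unfolding inj_on_def by (metis comp_apply domD option.sel)
  ultimately show ?thesis
    by (simp add: summable_on_reindex weight_def[abs_def] comp_def)
qed

lemma lam_eq_infsum_weight_extension: "t \<subseteq>\<^sub>m u \<Longrightarrow> lam t = infsum (weight u) (dom t)"
  unfolding lam_eq_infsum_weight weight_def map_le_def by (rule infsum_cong) simp

lemma lam_mono:
  assumes "inj_on u (dom u)" "t \<subseteq>\<^sub>m u"
  shows "lam t \<le> lam u"
proof -
  have "dom t \<subseteq> dom u"
    using assms(2) by (rule map_le_implies_dom_le)
  moreover note summable_on_weight[OF assms(1)]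
  ultimately show ?thesis
    unfolding lam_eq_infsum_weight_extension[OF assms(2)] lam_eq_infsum_weight[of u]
    by (intro infsum_mono2 weight_nonneg) (auto intro: summable_on_subset_banach)
qed

lemma lam_add_value:
  assumes "inj_on u (dom u)" "t \<subseteq>\<^sub>m u" "u b = Some j" "b \<notin> dom t"
  shows "lam t + (1/2) ^ j \<le> lam u"
proof -
  have sub: "insert b (dom t) \<subseteq> dom u"
    using assms(2,3) map_le_implies_dom_le by blast
  have summable: "weight u summable_on insert b (dom t)"
    using summable_on_weight[OF assms(1)] sub by (rule summable_on_subset_banach)
  have "infsum (weight u) (insert b (dom t)) = weight u b + infsum (weight u) (dom t)"
    by (intro infsum_insert summable_on_subset_banach[OF summable] assms(4)) blast
  then have "lam t + (1/2) ^ j = infsum (weight u) (insert b (dom t))"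
    using assms(3) by (simp add: lam_eq_infsum_weight_extension[OF assms(2)] weight_def)
  also have "\<dots> \<le> lam u"
    unfolding lam_eq_infsum_weight[of u]
    using summable summable_on_weight[OF assms(1)] sub by (rule infsum_mono2) (rule weight_nonneg)
  finally show ?thesis .
qed

lemma lam_le_finite_parts:
  assumes "inj_on u (dom u)"
    and "\<And>F. finite F \<Longrightarrow> F \<subseteq> dom u \<Longrightarrow> \<exists>t. t \<subseteq>\<^sub>m u \<and> F \<subseteq> dom t \<and> lam t \<le> c"
  shows "lam u \<le> c"
  unfolding lam_eq_infsum_weight[of u]
proof (rule infsum_le_finite_sums[OF summable_on_weight[OF assms(1)]])
  fix F assume F: "finite F" "F \<subseteq> dom u"
  then obtain t where t: "t \<subseteq>\<^sub>m u" "F \<subseteq> dom t" "lam t \<le> c"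
    using assms(2) by blast
  have "dom t \<subseteq> dom u" using t(1) map_le_implies_dom_le by blast
  then have "weight u summable_on dom t"
    using summable_on_weight[OF assms(1)] by (rule summable_on_subset_banach[rotated])
  then have "sum (weight u) F \<le> infsum (weight u) (dom t)"
    using F(1) t(2) by (intro finite_sum_le_infsum weight_nonneg)
  then show "sum (weight u) F \<le> c"
    using t by (simp add: lam_eq_infsum_weight_extension)
qed

lemma nbhd_mono: "e \<le> e' \<Longrightarrow> nbhd t e \<subseteq> nbhd t e'"
  unfolding nbhd_def by auto

lemma self_in_nbhd: "t \<in> Lam \<Longrightarrow> 0 < e \<Longrightarrow> t \<in> nbhd t e"
  unfolding nbhd_def by auto

lemma istopology_T_lam:
  "istopology (\<lambda>U. U \<subseteq> (Lam :: ('o::wellorder \<rightharpoonup> nat) set) \<and> (\<forall>t\<in>U. \<exists>\<epsilon>>0. nbhd t \<epsilon> \<subseteq> U))"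
  unfolding istopology_def
proof (rule conjI; intro allI impI)
  fix S T :: "('o \<rightharpoonup> nat) set"
  assume S: "S \<subseteq> Lam \<and> (\<forall>t\<in>S. \<exists>\<epsilon>>0. nbhd t \<epsilon> \<subseteq> S)"
    and T: "T \<subseteq> Lam \<and> (\<forall>t\<in>T. \<exists>\<epsilon>>0. nbhd t \<epsilon> \<subseteq> T)"
  show "S \<inter> T \<subseteq> Lam \<and> (\<forall>t\<in>S \<inter> T. \<exists>\<epsilon>>0. nbhd t \<epsilon> \<subseteq> S \<inter> T)"
  proof (intro conjI ballI)
    show "S \<inter> T \<subseteq> Lam" using S by auto
    fix t assume "t \<in> S \<inter> T"
    then obtain e e' where "e > 0" "nbhd t e \<subseteq> S" "e' > 0" "nbhd t e' \<subseteq> T"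
      using S T by blast
    then show "\<exists>\<epsilon>>0. nbhd t \<epsilon> \<subseteq> S \<inter> T"
      using nbhd_mono[of "min e e'" e t] nbhd_mono[of "min e e'" e' t]
      by (intro exI[of _ "min e e'"]) auto
  qed
next
  fix K :: "('o \<rightharpoonup> nat) set set"
  assume K: "\<forall>S\<in>K. S \<subseteq> Lam \<and> (\<forall>t\<in>S. \<exists>\<epsilon>>0. nbhd t \<epsilon> \<subseteq> S)"
  show "\<Union>K \<subseteq> Lam \<and> (\<forall>t\<in>\<Union>K. \<exists>\<epsilon>>0. nbhd t \<epsilon> \<subseteq> \<Union>K)"
  proof (intro conjI ballI)
    show "\<Union>K \<subseteq> Lam" using K by auto
    fix t assume "t \<in> \<Union>K"
    then obtain S where S: "S \<in> K" "t \<in> S" by blast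
    then obtain e where "e > 0" "nbhd t e \<subseteq> S" using K by meson
    then show "\<exists>\<epsilon>>0. nbhd t \<epsilon> \<subseteq> \<Union>K" using S(1) by blast
  qed
qed

lemma openin_T_lam: "openin T_lam U \<longleftrightarrow> U \<subseteq> Lam \<and> (\<forall>t\<in>U. \<exists>\<epsilon>>0. nbhd t \<epsilon> \<subseteq> U)"
  unfolding T_lam_def by (simp only: topology_inverse'[OF istopology_T_lam])

lemma openin_nbhd: "openin T_lam (nbhd t e)"
  unfolding openin_T_lam
proof (intro conjI ballI)
  show "nbhd t e \<subseteq> Lam" unfolding nbhd_def by auto
  fix u assume u: "u \<in> nbhd t e"
  then have "nbhd u (lam t + e - lam u) \<subseteq> nbhd t e"
    unfolding nbhd_def by (auto intro: map_le_trans)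
  moreover have "lam t + e - lam u > 0" using u unfolding nbhd_def by auto
  ultimately show "\<exists>\<epsilon>>0. nbhd u \<epsilon> \<subseteq> nbhd t e" by blast
qed

lemma down_closed_eq_lessThan:
  fixes D :: "'a::wellorder set"
  assumes "D \<noteq> UNIV" "\<And>x y. x \<in> D \<Longrightarrow> y < x \<Longrightarrow> y \<in> D"
  shows "D = {..<LEAST x. x \<notin> D}"
proof -
  have "(LEAST x. x \<notin> D) \<notin> D"
    using assms(1) by (metis LeastI UNIV_eq_I)
  then show ?thesis
    using assms(2) not_less_Least by (fastforce simp: not_less_iff_gr_or_eq)
qed

lemma ran_map_le:
  assumes "f \<subseteq>\<^sub>m g"
  shows "ran f \<subseteq> ran g"
proof
  fix y assume "y \<in> ran f"
  then obtain x where "f x = Some y"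
    by (auto simp: ran_def)
  with assms have "g x = Some y"
    unfolding map_le_def by (metis domI)
  then show "y \<in> ran g"
    by (rule ranI)
qed

text \<open>If x lies in no dom (t n), the LEAST is junk, but then every t n x is None anyway.\<close>
definition map_Union :: "(nat \<Rightarrow> 'a \<rightharpoonup> 'b) \<Rightarrow> 'a \<rightharpoonup> 'b" where
  "map_Union t x = t (LEAST n. x \<in> dom (t n)) x"

context
  fixes t :: "nat \<Rightarrow> 'a \<rightharpoonup> 'b"
  assumes map_le_Suc: "\<And>n. t n \<subseteq>\<^sub>m t (Suc n)"
begin

lemma map_le_chain: "m \<le> n \<Longrightarrow> t m \<subseteq>\<^sub>m t n"
  by (induction n rule: dec_induct) (auto intro: map_le_trans map_le_Suc)

lemma map_Union_eq: "x \<in> dom (t n) \<Longrightarrow> map_Union t x = t n x"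
  unfolding map_Union_def
  by (metis (mono_tags, lifting) LeastI Least_le map_le_chain map_le_def)

lemma map_le_map_Union: "t n \<subseteq>\<^sub>m map_Union t"
  unfolding map_le_def by (simp add: map_Union_eq)

lemma dom_map_Union: "dom (map_Union t) = (\<Union>n. dom (t n))"
proof (intro equalityI subsetI)
  fix x assume "x \<in> dom (map_Union t)"
  then show "x \<in> (\<Union>n. dom (t n))"
    unfolding map_Union_def by blast
next
  fix x assume "x \<in> (\<Union>n. dom (t n))"
  then obtain n where "x \<in> dom (t n)" by blast
  then show "x \<in> dom (map_Union t)" by (simp add: map_Union_eq domIff)
qed

lemma ran_map_Union: "ran (map_Union t) = (\<Union>n. ran (t n))"
proof (intro equalityI subsetI)
  fix y assume "y \<in> ran (map_Union t)"
  then obtain x where x: "map_Union t x = Some y"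
    by (auto simp: ran_def)
  then obtain n where "x \<in> dom (t n)"
    using dom_map_Union by blast
  then show "y \<in> (\<Union>n. ran (t n))"
    using x by (auto simp: map_Union_eq ran_def)
next
  fix y assume "y \<in> (\<Union>n. ran (t n))"
  then obtain n x where "t n x = Some y"
    by (auto simp: ran_def)
  then show "y \<in> ran (map_Union t)"
    by (metis domI map_Union_eq ranI)
qed

lemma inj_on_map_Union:
  assumes "\<And>n. inj_on (t n) (dom (t n))"
  shows "inj_on (map_Union t) (dom (map_Union t))"
proof (rule inj_onI)
  fix x y assume "x \<in> dom (map_Union t)" "y \<in> dom (map_Union t)" and eq: "map_Union t x = map_Union t y"
  then obtain m n where "x \<in> dom (t m)" "y \<in> dom (t n)"
    unfolding dom_map_Union by blast
  moreover have "dom (t m) \<subseteq> dom (t (max m n))" "dom (t n) \<subseteq> dom (t (max m n))"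
    by (simp_all add: map_le_chain map_le_implies_dom_le)
  ultimately have "x \<in> dom (t (max m n))" "y \<in> dom (t (max m n))"
    by blast+
  then show "x = y"
    using eq assms[of "max m n"] by (simp add: map_Union_eq inj_on_eq_iff)
qed

lemma finite_subset_dom_map_UnionE:
  assumes "finite F" "F \<subseteq> dom (map_Union t)"
  obtains n where "F \<subseteq> dom (t n)"
proof -
  have "dom (t m) \<subseteq> dom (t n) \<or> dom (t n) \<subseteq> dom (t m)" for m n
    using map_le_chain map_le_implies_dom_le nat_le_linear by metis
  then have "subset.chain UNIV (range (\<lambda>n. dom (t n)))"
    unfolding subset.chain_def by blast
  then show ?thesis
    using finite_subset_Union_chain assms that unfolding dom_map_Union by blast
qed

end

lemma lam_map_Union_le:
  fixes t :: "nat \<Rightarrow> 'o::wellorder \<rightharpoonup> nat"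
  assumes step: "\<And>n. t n \<subseteq>\<^sub>m t (Suc n)"
    and "\<And>n. inj_on (t n) (dom (t n))" "\<And>n. lam (t n) \<le> c"
  shows "lam (map_Union t) \<le> c"
proof (rule lam_le_finite_parts)
  show "inj_on (map_Union t) (dom (map_Union t))"
    using inj_on_map_Union[of t, OF step] assms(2) .
  fix F assume "finite F" "F \<subseteq> dom (map_Union t)"
  then obtain n where "F \<subseteq> dom (t n)"
    using finite_subset_dom_map_UnionE[of t, OF step] by blast
  then show "\<exists>u. u \<subseteq>\<^sub>m map_Union t \<and> F \<subseteq> dom u \<and> lam u \<le> c"
    using map_le_map_Union[of t, OF step] assms(3) by blast
qed

lemma map_Union_in_Lam:
  fixes t :: "nat \<Rightarrow> 'o::wellorder \<rightharpoonup> nat"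
  assumes "uncountable (UNIV :: 'o set)" "\<And>a::'o. countable {..<a}"
    and step: "\<And>n. t n \<subseteq>\<^sub>m t (Suc n)"
    and Lam: "\<And>n. t n \<in> Lam"
    and "infinite (UNIV - (\<Union>n. ran (t n)))"
  shows "map_Union t \<in> Lam"
proof -
  have segment: "\<exists>a. dom (t n) = {..<a}" for n
    using Lam unfolding Lam_def by blast
  have "countable (dom (t n))" for n
    using segment[of n] assms(2) by metis
  then have "countable (dom (map_Union t))"
    unfolding dom_map_Union[of t, OF step] by (intro countable_UN) auto
  then have proper: "dom (map_Union t) \<noteq> UNIV"
    using assms(1) by auto
  have down_closed: "y \<in> dom (map_Union t)" if x: "x \<in> dom (map_Union t)" and "y < x" for x y
  proof -
    obtain n where "x \<in> dom (t n)"
      using x unfolding dom_map_Union[of t, OF step] by blast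
    moreover obtain a where "dom (t n) = {..<a}"
      using segment by blast
    ultimately have "y \<in> dom (t n)"
      using \<open>y < x\<close> by auto
    then show ?thesis
      unfolding dom_map_Union[of t, OF step] by blast
  qed
  have "dom (map_Union t) = {..<LEAST x. x \<notin> dom (map_Union t)}"
    using proper down_closed by (rule down_closed_eq_lessThan)
  moreover have "inj_on (map_Union t) (dom (map_Union t))"
    using Lam unfolding Lam_def by (intro inj_on_map_Union[of t, OF step]) blast
  moreover have "infinite (UNIV - ran (map_Union t))"
    using assms(5) by (simp add: ran_map_Union[of t, OF step])
  ultimately show ?thesis
    unfolding Lam_def by blast
qed

definition admissible :: "('o::wellorder \<rightharpoonup> nat) \<Rightarrow> real \<Rightarrow> nat \<Rightarrow> bool" where
  "admissible t e k \<longleftrightarrow> t \<in> Lam \<and> 0 < e \<and> e \<le> (1/2) ^ k \<and> k \<notin> ran t"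

lemma admissible_nbhd_avoids:
  assumes "admissible t e k" "u \<in> nbhd t e"
  shows "k \<notin> ran u"
proof
  assume "k \<in> ran u"
  then obtain b where b: "u b = Some k" by (auto simp: ran_def)
  have "b \<notin> dom t"
    using assms b unfolding admissible_def nbhd_def map_le_def ran_def by force
  then have "lam t + (1/2) ^ k \<le> lam u"
    using assms b unfolding nbhd_def Lam_def by (intro lam_add_value) auto
  then show False
    using assms unfolding admissible_def nbhd_def by auto
qed

lemma admissible_nbhd_inside:
  assumes "openin T_lam V" "t \<in> V" "k \<notin> ran t" "0 < c"
  obtains e where "admissible t e k" "e < c" "nbhd t e \<subseteq> V"
proof -
  obtain e where e: "0 < e" "nbhd t e \<subseteq> V"
    using assms(1,2) unfolding openin_T_lam by blast
  let ?e = "min e (min (c/2) ((1/2) ^ k))"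
  have "admissible t ?e k"
    using assms e openin_T_lam unfolding admissible_def by auto
  moreover have "nbhd t ?e \<subseteq> V"
    using e nbhd_mono[of ?e e t] by auto
  ultimately show ?thesis
    using that assms(4) by auto
qed

lemma admissible_nbhd_in_open:
  assumes "openin T_lam V" "V \<noteq> {}"
  obtains t e k where "admissible t e k" "nbhd t e \<subseteq> V"
proof -
  obtain t where t: "t \<in> V"
    using assms(2) by blast
  then have "infinite (UNIV - ran t)"
    using assms(1) unfolding openin_T_lam Lam_def by blast
  then obtain k where "k \<notin> ran t"
    by (metis Diff_iff finite.emptyI ex_in_conv)
  then show ?thesis
    using admissible_nbhd_inside[OF assms(1) t] zero_less_one that by metis
qed

lemma shrink_admissible:
  assumes "admissible t e k" "openin T_lam U" "T_lam closure_of U = topspace T_lam"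
  obtains t' e' k' where "admissible t' e' k'" "k < k'"
    "nbhd t' e' \<subseteq> U \<inter> nbhd t e" "lam t' + e' < lam t + e"
proof -
  obtain t' where t': "t' \<in> U \<inter> nbhd t e"
    using assms openin_nbhd self_in_nbhd unfolding dense_intersects_open admissible_def by blast
  then have "infinite (UNIV - ran t')"
    unfolding nbhd_def Lam_def by blast
  then obtain k' where k': "k' \<notin> ran t'" "k < k'"
    unfolding infinite_nat_iff_unbounded by blast
  have "openin T_lam (U \<inter> nbhd t e)"
    using assms(2) openin_nbhd by blast
  moreover have "0 < lam t + e - lam t'"
    using t' unfolding nbhd_def by auto
  ultimately obtain e' where "admissible t' e' k'" "e' < lam t + e - lam t'"
    "nbhd t' e' \<subseteq> U \<inter> nbhd t e"
    using admissible_nbhd_inside t' k'(1) by metis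
  then show ?thesis
    using that k'(2) by auto
qed

lemma nested_admissible_nbhds_meet:
  fixes t :: "nat \<Rightarrow> 'o::wellorder \<rightharpoonup> nat"
  assumes "uncountable (UNIV :: 'o set)" "\<And>a::'o. countable {..<a}"
    and adm: "\<And>n. admissible (t n) (e n) (k n)" and "strict_mono k"
    and nested: "\<And>n. nbhd (t (Suc n)) (e (Suc n)) \<subseteq> nbhd (t n) (e n)"
    and shrinking: "\<And>n. lam (t (Suc n)) + e (Suc n) < lam (t n) + e n"
  shows "map_Union t \<in> nbhd (t n) (e n)"
proof -
  have Lam: "t n \<in> Lam" and inj: "inj_on (t n) (dom (t n))" and pos: "0 < e n" for n
    using adm unfolding admissible_def Lam_def by auto
  have later: "t m \<in> nbhd (t n) (e n)" if "n \<le> m" for m n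
  proof -
    have "nbhd (t m) (e m) \<subseteq> nbhd (t n) (e n)"
      using nested that by (rule lift_Suc_antimono_le)
    then show ?thesis
      using self_in_nbhd[OF Lam pos] by blast
  qed
  have step: "t n \<subseteq>\<^sub>m t (Suc n)" for n
    using later[of n "Suc n"] unfolding nbhd_def by simp
  have "k n \<notin> ran (t m)" for m n
  proof
    assume "k n \<in> ran (t m)"
    then have "k n \<in> ran (t (max m n))"
      using ran_map_le[OF map_le_chain[of t m "max m n", OF step]] by auto
    then show False
      using admissible_nbhd_avoids[OF adm later[of n "max m n"]] by simp
  qed
  then have "range k \<subseteq> UNIV - (\<Union>n. ran (t n))"
    by blast
  moreover have "infinite (range k)"
    using \<open>strict_mono k\<close> by (simp add: range_inj_infinite strict_mono_imp_inj_on)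
  ultimately have "infinite (UNIV - (\<Union>n. ran (t n)))"
    by (rule infinite_super)
  then have "map_Union t \<in> Lam"
    by (rule map_Union_in_Lam[of t, OF assms(1,2) step Lam])
  have "lam (t m) \<le> lam (t (Suc n)) + e (Suc n)" for m
  proof (cases "Suc n \<le> m")
    case True
    then show ?thesis
      using later[OF True] unfolding nbhd_def by auto
  next
    case False
    then have "lam (t m) \<le> lam (t (Suc n))"
      using lam_mono[OF inj map_le_chain[of t, OF step]] by simp
    then show ?thesis
      using pos[of "Suc n"] by linarith
  qed
  then have "lam (map_Union t) \<le> lam (t (Suc n)) + e (Suc n)"
    by (rule lam_map_Union_le[of t, OF step inj])
  then have "lam (map_Union t) < lam (t n) + e n"
    using shrinking[of n] by linarith
  then show ?thesis
    using \<open>map_Union t \<in> Lam\<close> map_le_map_Union[of t, OF step] by (simp add: nbhd_def)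
qed

lemma nested_admissible_sequence:
  assumes "\<And>n. openin T_lam (U n) \<and> T_lam closure_of U n = topspace T_lam"
    and "openin T_lam W" "W \<noteq> {}"
  obtains t :: "nat \<Rightarrow> 'o::wellorder \<rightharpoonup> nat" and e k
  where "\<And>n. admissible (t n) (e n) (k n)" "strict_mono k" "nbhd (t 0) (e 0) \<subseteq> W"
    "\<And>n. nbhd (t (Suc n)) (e (Suc n)) \<subseteq> U n \<inter> nbhd (t n) (e n)"
    "\<And>n. lam (t (Suc n)) + e (Suc n) < lam (t n) + e n"
proof -
  define P where "P = (\<lambda>(t, e, k). admissible t e k \<and> nbhd t e \<subseteq> W)"
  define Q where "Q n = (\<lambda>(t, e, k) (t', e', k' :: nat).
    k < k' \<and> nbhd t' e' \<subseteq> U n \<inter> nbhd t e \<and> lam t' + e' < lam t + e)" for n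
  obtain t0 e0 k0 where "admissible t0 e0 k0" "nbhd t0 e0 \<subseteq> W"
    using admissible_nbhd_in_open assms(2,3) by blast
  then have start: "P (t0, e0, k0)"
    unfolding P_def by simp
  have step: "\<exists>y. P y \<and> Q n x y" if "P x" for x n
  proof -
    obtain t e k where x: "x = (t, e, k)" "admissible t e k" "nbhd t e \<subseteq> W"
      using \<open>P x\<close> unfolding P_def by auto
    then obtain t' e' k' where "admissible t' e' k'" "k < k'"
      "nbhd t' e' \<subseteq> U n \<inter> nbhd t e" "lam t' + e' < lam t + e"
      using shrink_admissible assms(1) by metis
    then have "P (t', e', k') \<and> Q n x (t', e', k')"
      using x unfolding P_def Q_def by auto
    then show ?thesis ..
  qed
  obtain f where f: "\<And>n. P (f n)" "\<And>n. Q n (f n) (f (Suc n))"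
    using dependent_nat_choice[of "\<lambda>_. P" Q] start step by blast
  show ?thesis
  proof
    show "admissible (fst (f n)) (fst (snd (f n))) (snd (snd (f n)))" for n
      using f(1)[of n] unfolding P_def by (simp add: case_prod_beta)
    show "nbhd (fst (f 0)) (fst (snd (f 0))) \<subseteq> W"
      using f(1)[of 0] unfolding P_def by (simp add: case_prod_beta)
    show "strict_mono (\<lambda>n. snd (snd (f n)))"
      using f(2) unfolding Q_def strict_mono_Suc_iff by (simp add: case_prod_beta)
  qed (use f(2) in \<open>simp_all add: Q_def case_prod_beta\<close>)
qed

theorem lemma10p1:
  assumes "uncountable (UNIV :: 'o::wellorder set)"
    and "\<forall>a::'o. countable {..<a}"
  shows "Baire_space (T_lam :: ('o \<rightharpoonup> nat) topology)"
  unfolding Baire_space_def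
proof (intro allI impI)
  fix U :: "nat \<Rightarrow> ('o \<rightharpoonup> nat) set"
  assume U: "\<forall>n. openin T_lam (U n) \<and> T_lam closure_of U n = topspace T_lam"
  have "(\<Inter>n. U n) \<inter> W \<noteq> {}" if W: "openin T_lam W" "W \<noteq> {}" for W
  proof -
    obtain t :: "nat \<Rightarrow> 'o \<rightharpoonup> nat" and e k where
      adm: "\<And>n. admissible (t n) (e n) (k n)" "strict_mono k" and "nbhd (t 0) (e 0) \<subseteq> W"
      and nested: "\<And>n. nbhd (t (Suc n)) (e (Suc n)) \<subseteq> U n \<inter> nbhd (t n) (e n)"
      and shrinking: "\<And>n. lam (t (Suc n)) + e (Suc n) < lam (t n) + e n"
      using nested_admissible_sequence[OF _ W] U by metis
    have "map_Union t \<in> nbhd (t n) (e n)" for n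
      using nested_admissible_nbhds_meet[OF assms(1) _ adm _ shrinking] assms(2) nested by blast
    then show ?thesis
      using \<open>nbhd (t 0) (e 0) \<subseteq> W\<close> nested by blast
  qed
  then show "T_lam closure_of (\<Inter>n. U n) = topspace T_lam"
    unfolding dense_intersects_open by blast
qed

end
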